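(* Let $r\ge 1$ and $g\ge 3$ be integers and let $n[1,r;g]$ denote the order of a $[1,r;g]$-mixed cage. Then $$n[1,r;g]\ \ge\ \begin{cases} 2\left(1+\sum_{i=1}^{(g-3)/2} n_0(r,2i+1)\right)+n_0(r,g) & \text{if } g \text{ is odd},\\[1mm] 2\left(1+\sum_{i=1}^{(g-2)/2} n_0(r,2i+1)\right) & \text{if } g \text{ is even},\end{cases}$$ where $n_0(r,g)=1+r+r(r-1)+\cdots+r(r-1)^{(g-3)/2}$ for odd $g$ and $n_0(r,g)=2\left(1+(r-1)+\cdots+(r-1)^{g/2-1}\right)$ for even $g$.
   Context: A mixed graph is a finite graph that may contain both edges and arcs. A $[z,r;g]$-mixed graph is a mixed graph in which every vertex is the tail of exactly $z$ arcs, the head of exactly $z$ arcs, and is incident with exactly $r$ edges, and whose girth is $g$. Walks traverse edges in either direction and arcs only in their direction; a cycle is a closed walk with no repeated vertices (other than start = end) and no repeated edge or arc; the girth is the length of a shortest cycle. A $[z,r;g]$-mixed cage is a $[z,r;g]$-mixed graph of minimum order. *)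

theory Defs
  imports Main
begin

definition mixed_graph :: "'a set \<Rightarrow> 'a set set \<Rightarrow> ('a \<times> 'a) set \<Rightarrow> bool" where
  "mixed_graph V E A \<longleftrightarrow> finite V \<and>
     (\<forall>e\<in>E. e \<subseteq> V \<and> card e = 2) \<and>
     (\<forall>(u,v)\<in>A. u \<in> V \<and> v \<in> V \<and> u \<noteq> v)"

definition mstep :: "'a set set \<Rightarrow> ('a \<times> 'a) set \<Rightarrow> ('a set + ('a \<times> 'a)) \<Rightarrow> 'a \<Rightarrow> 'a \<Rightarrow> bool" where
  "mstep E A x u v = (case x of Inl e \<Rightarrow> e \<in> E \<and> e = {u, v} | Inr a \<Rightarrow> a \<in> A \<and> a = (u, v))"

definition mixed_cycle :: "'a set \<Rightarrow> 'a set set \<Rightarrow> ('a \<times> 'a) set \<Rightarrow> 'a list \<Rightarrow> ('a set + ('a \<times> 'a)) list \<Rightarrow> bool" where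
  "mixed_cycle V E A vs xs \<longleftrightarrow> length vs \<ge> 1 \<and> length xs = length vs \<and>
     set vs \<subseteq> V \<and> distinct vs \<and> distinct xs \<and>
     (\<forall>i < length vs. mstep E A (xs ! i) (vs ! i) (vs ! ((i + 1) mod length vs)))"

definition mixed_girth :: "'a set \<Rightarrow> 'a set set \<Rightarrow> ('a \<times> 'a) set \<Rightarrow> nat \<Rightarrow> bool" where
  "mixed_girth V E A g \<longleftrightarrow>
     (\<exists>vs xs. mixed_cycle V E A vs xs \<and> length vs = g) \<and>
     (\<forall>vs xs. mixed_cycle V E A vs xs \<longrightarrow> g \<le> length vs)"

definition zrg_mixed_graph :: "nat \<Rightarrow> nat \<Rightarrow> nat \<Rightarrow> 'a set \<Rightarrow> 'a set set \<Rightarrow> ('a \<times> 'a) set \<Rightarrow> bool" where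
  "zrg_mixed_graph z r g V E A \<longleftrightarrow> mixed_graph V E A \<and>
     (\<forall>v\<in>V. card {u. (v, u) \<in> A} = z \<and> card {u. (u, v) \<in> A} = z \<and>
             card {e\<in>E. v \<in> e} = r) \<and>
     mixed_girth V E A g"

definition n0 :: "nat \<Rightarrow> nat \<Rightarrow> nat" where
  "n0 r g = (if odd g then 1 + (\<Sum>i=0..(g - 3) div 2. r * (r - 1) ^ i)
             else 2 * (\<Sum>i=0..g div 2 - 1. (r - 1) ^ i))"

definition mixed_bound :: "nat \<Rightarrow> nat \<Rightarrow> nat" where
  "mixed_bound r g = (if odd g then 2 * (1 + (\<Sum>i=1..(g - 3) div 2. n0 r (2 * i + 1))) + n0 r g
                      else 2 * (1 + (\<Sum>i=1..(g - 2) div 2. n0 r (2 * i + 1))))"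

end

theory Submission
  imports Defs
begin

text \<open>Following out-arcs from any vertex gives a directed walk x_0, ..., x_(g-1).
  The balls of radius min j (g - 1 - j) around x_j in the undirected part are pairwise
  disjoint: a vertex z in the balls around x_j and x_l, j < l, would close a cycle
  x_j \<rightarrow> x_(j+1) \<leadsto> x_l \<leadsto> z \<leadsto> x_j shorter than g. A ball of radius \<rho> with
  2\<rho> + 1 \<le> g is a Moore tree, so it has at least 1 + r + r(r-1) + ... + r(r-1)^(\<rho>-1)
  vertices, and summing over j gives the bound.\<close>

text \<open>A walk from u is recorded as the list of pairs (element traversed, vertex reached);
  its vertex sequence is u # map snd ps.\<close>

inductive walk :: "'a set set \<Rightarrow> ('a \<times> 'a) set \<Rightarrow> 'a \<Rightarrow> (('a set + ('a \<times> 'a)) \<times> 'a) list \<Rightarrow> 'a \<Rightarrow> bool"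
  for E A where
  walk_Nil: "walk E A u [] u"
| walk_Cons: "mstep E A x u w \<Longrightarrow> walk E A w ps v \<Longrightarrow> walk E A u ((x, w) # ps) v"

inductive_cases walk_NilE: "walk E A u [] v"

lemma walk_append: "walk E A u ps w \<Longrightarrow> walk E A w qs v \<Longrightarrow> walk E A u (ps @ qs) v"
  by (induction rule: walk.induct) (auto intro: walk.intros)

lemma walk_snoc: "walk E A u ps w \<Longrightarrow> mstep E A x w v \<Longrightarrow> walk E A u (ps @ [(x, v)]) v"
  by (rule walk_append) (auto intro: walk.intros)

lemma walk_element_step:
  "walk E A u ps v \<Longrightarrow> (x, b) \<in> set ps \<Longrightarrow> \<exists>a \<in> set (u # map snd ps). mstep E A x a b"
  by (induction rule: walk.induct) auto

lemma walk_nth_step: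
  "walk E A u ps v \<Longrightarrow> i < length ps \<Longrightarrow>
   mstep E A (fst (ps ! i)) ((u # map snd ps) ! i) ((u # map snd ps) ! Suc i)"
proof (induction arbitrary: i rule: walk.induct)
  case (walk_Cons x u w ps v)
  then show ?case by (cases i) auto
qed simp

lemma walk_last: "walk E A u ps v \<Longrightarrow> last (u # map snd ps) = v"
  by (induction rule: walk.induct) (auto elim: walk_NilE)

lemma walk_distinct_elements:
  "walk E A u ps v \<Longrightarrow> distinct (u # map snd ps) \<Longrightarrow> distinct (map fst ps)"
proof (induction rule: walk.induct)
  case (walk_Cons x u w ps v)
  have "x \<notin> fst ` set ps"
  proof
    assume "x \<in> fst ` set ps"
    then obtain b where xb: "(x, b) \<in> set ps" by force
    then obtain a where "a \<in> set (w # map snd ps)" "mstep E A x a b"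
      using walk_element_step[OF walk_Cons.hyps(2)] by blast
    moreover have "b \<in> set (w # map snd ps)" using xb by force
    ultimately show False using walk_Cons.hyps(1) walk_Cons.prems
      by (cases x) (auto simp: mstep_def doubleton_eq_iff)
  qed
  then show ?case using walk_Cons by simp
qed simp

lemma walk_suffix:
  "walk E A w ps v \<Longrightarrow> y \<in> set (w # map snd ps) \<Longrightarrow>
   \<exists>ps'. walk E A y ps' v \<and> length ps' \<le> length ps \<and> set ps' \<subseteq> set ps"
proof (induction rule: walk.induct)
  case (walk_Cons x u w ps v)
  show ?case
  proof (cases "y = u")
    case True
    then show ?thesis using walk_Cons.hyps by (auto intro: walk.intros)
  next
    case False
    then obtain ps' where "walk E A y ps' v" "length ps' \<le> length ps" "set ps' \<subseteq> set ps"
      using walk_Cons.IH walk_Cons.prems by auto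
    then show ?thesis by (intro exI[of _ ps']) auto
  qed
qed (auto intro: walk.intros)

lemma walk_shortcut:
  "walk E A u ps v \<Longrightarrow> \<not> distinct (u # map snd ps) \<Longrightarrow>
   \<exists>ps'. walk E A u ps' v \<and> length ps' < length ps \<and> set ps' \<subseteq> set ps"
proof (induction rule: walk.induct)
  case (walk_Cons x u w ps v)
  show ?case
  proof (cases "distinct (w # map snd ps)")
    case True
    then have "u \<in> set (w # map snd ps)" using walk_Cons.prems by simp
    then obtain ps' where "walk E A u ps' v" "length ps' \<le> length ps" "set ps' \<subseteq> set ps"
      using walk_suffix[OF walk_Cons.hyps(2)] by blast
    then show ?thesis by (intro exI[of _ ps']) auto
  next
    case False
    then obtain ps' where "walk E A w ps' v" "length ps' < length ps" "set ps' \<subseteq> set ps"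
      using walk_Cons.IH by blast
    then show ?thesis using walk_Cons.hyps(1) by (intro exI[of _ "(x, w) # ps'"]) (auto intro: walk.intros)
  qed
qed simp

lemma walk_distinct_subwalk:
  "walk E A u ps v \<Longrightarrow>
   \<exists>ps'. walk E A u ps' v \<and> distinct (u # map snd ps') \<and> length ps' \<le> length ps \<and> set ps' \<subseteq> set ps"
proof (induction "length ps" arbitrary: ps rule: less_induct)
  case (less ps)
  show ?case
  proof (cases "distinct (u # map snd ps)")
    case False
    then obtain ps' where "walk E A u ps' v" "length ps' < length ps" "set ps' \<subseteq> set ps"
      using walk_shortcut[OF less.prems] by blast
    with less.hyps show ?thesis by fastforce
  qed (use less.prems in blast)
qed

lemma mstep_in_vertices: "mixed_graph V E A \<Longrightarrow> mstep E A x a b \<Longrightarrow> b \<in> V"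
  by (cases x) (auto simp: mstep_def mixed_graph_def)

lemma walk_in_vertices:
  "walk E A u ps v \<Longrightarrow> mixed_graph V E A \<Longrightarrow> u \<in> V \<Longrightarrow> set (u # map snd ps) \<subseteq> V"
  by (induction rule: walk.induct) (auto dest: mstep_in_vertices)

lemma mixed_cycle_of_walk:
  assumes "mixed_graph V E A" "walk E A v ps u" "distinct (v # map snd ps)" "v \<in> V"
    and "mstep E A e u v" "e \<notin> fst ` set ps"
  shows "mixed_cycle V E A (v # map snd ps) (map fst ps @ [e])"
proof -
  let ?vs = "v # map snd ps"
  have last_vertex: "?vs ! length ps = u"
    using walk_last[OF assms(2)] last_conv_nth[of ?vs] by simp
  have "mstep E A ((map fst ps @ [e]) ! i) (?vs ! i) (?vs ! ((i + 1) mod length ?vs))"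
    if "i < length ?vs" for i
  proof (cases "i < length ps")
    case True
    then show ?thesis using walk_nth_step[OF assms(2) True] by (simp add: nth_append)
  next
    case False
    with that have "i = length ps" by simp
    then show ?thesis using last_vertex assms(5) by (simp add: nth_append)
  qed
  moreover have "distinct (map fst ps @ [e])"
    using walk_distinct_elements[OF assms(2,3)] assms(6) by auto
  ultimately show ?thesis
    unfolding mixed_cycle_def using assms(3) walk_in_vertices[OF assms(2,1,4)] by simp
qed

lemma walk_edge_endpoints:
  "walk E A u ps v \<Longrightarrow> Inl e \<in> fst ` set ps \<Longrightarrow> e \<subseteq> set (u # map snd ps)"
proof -
  assume walk: "walk E A u ps v" and "Inl e \<in> fst ` set ps"
  then obtain c where c: "(Inl e, c) \<in> set ps" by force
  then obtain a where "a \<in> set (u # map snd ps)" "mstep E A (Inl e) a c"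
    using walk_element_step[OF walk] by blast
  moreover have "c \<in> set (u # map snd ps)" using c by force
  ultimately show ?thesis by (auto simp: mstep_def)
qed

lemma edge_walk_rev:
  "walk E A u ps v \<Longrightarrow> \<forall>p\<in>set ps. isl (fst p) \<Longrightarrow>
   \<exists>qs. walk E A v qs u \<and> length qs = length ps \<and> fst ` set qs = fst ` set ps"
proof (induction rule: walk.induct)
  case (walk_Cons x u w ps v)
  obtain qs where qs: "walk E A v qs w" "length qs = length ps" "fst ` set qs = fst ` set ps"
    using walk_Cons.IH walk_Cons.prems by auto
  have "mstep E A x w u"
    using walk_Cons.hyps(1) walk_Cons.prems by (cases x) (auto simp: mstep_def insert_commute)
  with qs show ?case by (intro exI[of _ "qs @ [(x, u)]"]) (auto intro: walk_snoc)
qed (use walk_Nil in fastforce)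

fun edge_reach :: "'a set set \<Rightarrow> 'a \<Rightarrow> 'a \<Rightarrow> nat \<Rightarrow> bool" where
  "edge_reach E x y 0 \<longleftrightarrow> y = x"
| "edge_reach E x y (Suc n) \<longleftrightarrow> (\<exists>w. edge_reach E x w n \<and> {w, y} \<in> E)"

lemma edge_reach_walk:
  "edge_reach E x y n \<Longrightarrow>
   \<exists>ps. walk E A x ps y \<and> length ps = n \<and> (\<forall>p\<in>set ps. isl (fst p)) \<and>
        (\<forall>z\<in>set (x # map snd ps). z = y \<or> (\<exists>k<n. edge_reach E x z k))"
proof (induction n arbitrary: y)
  case 0
  then show ?case by (auto intro: walk.intros)
next
  case (Suc n)
  then obtain w where w: "edge_reach E x w n" "{w, y} \<in> E" by auto
  then obtain ps where ps: "walk E A x ps w" "length ps = n" "\<forall>p\<in>set ps. isl (fst p)"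
    "\<forall>z\<in>set (x # map snd ps). z = w \<or> (\<exists>k<n. edge_reach E x z k)"
    using Suc.IH by blast
  have "walk E A x (ps @ [(Inl {w, y}, y)]) y"
    using ps(1) w(2) by (auto intro: walk_snoc simp: mstep_def)
  moreover have "\<forall>z\<in>set (x # map snd ps). \<exists>k<Suc n. edge_reach E x z k"
    using ps(4) w(1) by (metis lessI less_SucI)
  ultimately show ?case using ps(2,3) by (intro exI[of _ "ps @ [(Inl {w, y}, y)]"]) auto
qed

lemma edge_in_vertices: "mixed_graph V E A \<Longrightarrow> {a, b} \<in> E \<Longrightarrow> a \<in> V \<and> b \<in> V"
  unfolding mixed_graph_def by blast

lemma edge_neq:
  assumes "mixed_graph V E A" "{a, b} \<in> E"
  shows "a \<noteq> b"
proof
  assume "a = b"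
  moreover have "card {a, b} = 2" using assms unfolding mixed_graph_def by blast
  ultimately show False by simp
qed

lemma arc_in_vertices: "mixed_graph V E A \<Longrightarrow> (u, v) \<in> A \<Longrightarrow> u \<in> V \<and> v \<in> V"
  unfolding mixed_graph_def by blast

lemma edge_reach_in_vertices:
  assumes "mixed_graph V E A" "x \<in> V"
  shows "edge_reach E x y n \<Longrightarrow> y \<in> V"
proof (induction n arbitrary: y)
  case (Suc n)
  then obtain w where "{w, y} \<in> E" by auto
  then show ?case using edge_in_vertices[OF assms(1)] by blast
qed (simp add: assms(2))

definition neighbours :: "'a set set \<Rightarrow> 'a \<Rightarrow> 'a set" where
  "neighbours E y = {w. {y, w} \<in> E}"

definition edge_ball :: "'a set set \<Rightarrow> 'a \<Rightarrow> nat \<Rightarrow> 'a set" where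
  "edge_ball E x \<rho> = {y. \<exists>k\<le>\<rho>. edge_reach E x y k}"

definition edge_sphere :: "'a set set \<Rightarrow> 'a \<Rightarrow> nat \<Rightarrow> 'a set" where
  "edge_sphere E x \<rho> = {y. edge_reach E x y \<rho> \<and> (\<forall>k<\<rho>. \<not> edge_reach E x y k)}"

lemma edge_ball_0: "edge_ball E x 0 = {x}"
  by (simp add: edge_ball_def)

lemma edge_ball_Suc: "edge_ball E x (Suc \<rho>) = edge_ball E x \<rho> \<union> edge_sphere E x (Suc \<rho>)"
  unfolding edge_ball_def edge_sphere_def
  by (auto simp del: edge_reach.simps simp: le_Suc_eq less_Suc_eq_le)

lemma edge_ball_Int_edge_sphere_Suc: "edge_ball E x \<rho> \<inter> edge_sphere E x (Suc \<rho>) = {}"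
  unfolding edge_ball_def edge_sphere_def by (auto simp del: edge_reach.simps)

lemma edge_sphere_subset_edge_ball: "edge_sphere E x \<rho> \<subseteq> edge_ball E x \<rho>"
  unfolding edge_ball_def edge_sphere_def by blast

lemma edge_sphere_1:
  assumes "mixed_graph V E A"
  shows "edge_sphere E x 1 = neighbours E x"
proof -
  have "{x, y} \<in> E \<Longrightarrow> y \<noteq> x" for y using edge_neq[OF assms] by blast
  then show ?thesis unfolding edge_sphere_def neighbours_def by auto
qed

lemma edge_sphere_SucI:
  "y \<in> edge_sphere E x \<rho> \<Longrightarrow> w \<in> neighbours E y \<Longrightarrow> w \<notin> edge_ball E x \<rho> \<Longrightarrow>
   w \<in> edge_sphere E x (Suc \<rho>)"
  unfolding edge_sphere_def edge_ball_def neighbours_def by (auto simp: less_Suc_eq_le)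

lemma edge_ball_subset_vertices:
  assumes "mixed_graph V E A" "x \<in> V"
  shows "edge_ball E x \<rho> \<subseteq> V"
  unfolding edge_ball_def using edge_reach_in_vertices[OF assms] by blast

lemma neighbours_subset_vertices:
  assumes "mixed_graph V E A"
  shows "neighbours E y \<subseteq> V"
  unfolding neighbours_def using edge_in_vertices[OF assms] by blast

lemma card_neighbours:
  assumes "mixed_graph V E A"
  shows "card (neighbours E y) = card {e\<in>E. y \<in> e}"
proof (rule bij_betw_same_card)
  have "e \<in> (\<lambda>w. {y, w}) ` neighbours E y" if "e \<in> E" "y \<in> e" for e
  proof -
    have "card e = 2" using assms that(1) unfolding mixed_graph_def by blast
    then obtain a b where "e = {a, b}" by (auto simp: card_2_iff)
    with that(2) have "e = {y, if a = y then b else a}" by auto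
    with that(1) show ?thesis unfolding neighbours_def by auto
  qed
  then show "bij_betw (\<lambda>w. {y, w}) (neighbours E y) {e\<in>E. y \<in> e}"
    unfolding bij_betw_def inj_on_def neighbours_def by (auto simp: doubleton_eq_iff)
qed

definition moore_bound :: "nat \<Rightarrow> nat \<Rightarrow> nat" where
  "moore_bound r \<rho> = 1 + (\<Sum>i<\<rho>. r * (r - 1) ^ i)"

lemma sum_lessThan_add: "(\<Sum>j<m + n. h j) = (\<Sum>j<m. h j) + (\<Sum>j<n. h (m + j))"
  for h :: "nat \<Rightarrow> 'b::comm_monoid_add"
  by (induction n) (simp_all add: add.assoc)

lemma sum_min_dist_to_ends_even:
  "(\<Sum>j<2 * k. f (min j (2 * k - 1 - j))) = 2 * (\<Sum>j<k. f j)"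
  for f :: "nat \<Rightarrow> 'b::comm_semiring_1"
proof -
  let ?h = "\<lambda>j. f (min j (2 * k - 1 - j))"
  have "(\<Sum>j<2 * k. ?h j) = (\<Sum>j<k. ?h j) + (\<Sum>j<k. ?h (k + j))"
    using sum_lessThan_add[of ?h k k] by (simp add: mult_2)
  also have "(\<Sum>j<k. ?h j) = (\<Sum>j<k. f j)"
    by (rule sum.cong) (auto simp: min_def)
  also have "(\<Sum>j<k. ?h (k + j)) = (\<Sum>j<k. f (k - Suc j))"
    by (rule sum.cong) (auto simp: min_def)
  also have "\<dots> = (\<Sum>j<k. f j)" by (rule sum.nat_diff_reindex)
  finally show ?thesis by (simp add: mult_2)
qed

lemma sum_min_dist_to_ends_odd:
  "(\<Sum>j<2 * k + 1. f (min j (2 * k - j))) = 2 * (\<Sum>j<k. f j) + f k"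
  for f :: "nat \<Rightarrow> 'b::comm_semiring_1"
proof -
  let ?h = "\<lambda>j. f (min j (2 * k - j))"
  have split: "2 * k + 1 = Suc k + k" by simp
  have "(\<Sum>j<2 * k + 1. ?h j) = (\<Sum>j<Suc k. ?h j) + (\<Sum>j<k. ?h (Suc k + j))"
    unfolding split by (rule sum_lessThan_add)
  also have "(\<Sum>j<Suc k. ?h j) = (\<Sum>j<k. ?h j) + f k" by simp
  also have "(\<Sum>j<k. ?h j) = (\<Sum>j<k. f j)"
    by (rule sum.cong) (auto simp: min_def)
  also have "(\<Sum>j<k. ?h (Suc k + j)) = (\<Sum>j<k. f (k - Suc j))"
    by (rule sum.cong) (auto simp: min_def)
  also have "\<dots> = (\<Sum>j<k. f j)" by (rule sum.nat_diff_reindex)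
  finally show ?thesis by (simp add: mult_2 ac_simps)
qed

text \<open>For i = 0 this fails: truncated subtraction makes n0 r 1 = 1 + r.\<close>

lemma n0_odd_eq_moore_bound: "1 \<le> i \<Longrightarrow> n0 r (2 * i + 1) = moore_bound r i"
  by (cases i) (simp_all add: n0_def moore_bound_def atLeast0AtMost lessThan_Suc_atMost[symmetric])

lemma one_plus_sum_n0_eq:
  assumes "1 \<le> k"
  shows "1 + (\<Sum>i=1..k - 1. n0 r (2 * i + 1)) = (\<Sum>i<k. moore_bound r i)"
proof -
  obtain k' where k: "k = Suc k'" using assms by (cases k) auto
  have "(\<Sum>i=1..k'. n0 r (2 * i + 1)) = (\<Sum>i<k'. n0 r (2 * Suc i + 1))"
    using sum.atLeast1_atMost_eq[of "\<lambda>i. n0 r (2 * i + 1)" k'] by simp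
  also have "\<dots> = (\<Sum>i<k'. moore_bound r (Suc i))"
    by (rule sum.cong) (simp_all only: n0_odd_eq_moore_bound)
  also have "1 + \<dots> = (\<Sum>i<Suc k'. moore_bound r i)"
    by (simp only: sum.lessThan_Suc_shift) (simp add: moore_bound_def)
  finally show ?thesis unfolding k by simp
qed

lemma mixed_bound_eq_sum_moore_bound:
  assumes "3 \<le> g"
  shows "mixed_bound r g = (\<Sum>j<g. moore_bound r (min j (g - 1 - j)))"
proof (cases "odd g")
  case True
  then obtain k where g: "g = 2 * k + 1" by (metis oddE)
  with assms have k: "1 \<le> k" "(g - 3) div 2 = k - 1" by auto
  have "mixed_bound r g = 2 * (1 + (\<Sum>i=1..k - 1. n0 r (2 * i + 1))) + n0 r (2 * k + 1)"
    using True k(2) g by (simp add: mixed_bound_def)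
  also have "\<dots> = 2 * (\<Sum>i<k. moore_bound r i) + moore_bound r k"
    by (simp only: one_plus_sum_n0_eq[OF k(1)] n0_odd_eq_moore_bound[OF k(1)])
  also have "\<dots> = (\<Sum>j<g. moore_bound r (min j (g - 1 - j)))"
    using sum_min_dist_to_ends_odd[of "moore_bound r" k] g by simp
  finally show ?thesis .
next
  case False
  then obtain k where g: "g = 2 * k" by (metis evenE)
  with assms have k: "1 \<le> k" "(g - 2) div 2 = k - 1" by auto
  have "mixed_bound r g = 2 * (1 + (\<Sum>i=1..k - 1. n0 r (2 * i + 1)))"
    using False k(2) by (simp add: mixed_bound_def)
  also have "\<dots> = 2 * (\<Sum>i<k. moore_bound r i)"
    by (simp only: one_plus_sum_n0_eq[OF k(1)])
  also have "\<dots> = (\<Sum>j<g. moore_bound r (min j (g - 1 - j)))"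
    using sum_min_dist_to_ends_even[of "moore_bound r" k] g by simp
  finally show ?thesis .
qed

locale mixed_graph_girth_ge =
  fixes V :: "'a set" and E :: "'a set set" and A :: "('a \<times> 'a) set" and g :: nat
  assumes mixed_graph: "mixed_graph V E A"
    and girth_le_cycle_length: "mixed_cycle V E A vs xs \<Longrightarrow> g \<le> length vs"
begin

lemma finite_vertices: "finite V"
  using mixed_graph unfolding mixed_graph_def by blast

lemma finite_neighbours: "finite (neighbours E y)"
  using finite_subset[OF neighbours_subset_vertices[OF mixed_graph] finite_vertices] .

text \<open>Only edges have to be kept out of ps: a repeated arc would end at v, i.e. repeat a vertex.\<close>

lemma closed_walk_length_ge:
  assumes walk: "walk E A v ps u" and "v \<in> V" and closing: "mstep E A e u v"
    and "isl e \<Longrightarrow> e \<notin> fst ` set ps"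
  shows "g \<le> length ps + 1"
proof -
  obtain ps' where ps': "walk E A v ps' u" "distinct (v # map snd ps')"
    "length ps' \<le> length ps" "set ps' \<subseteq> set ps"
    using walk_distinct_subwalk[OF walk] by blast
  have "e \<notin> fst ` set ps'"
  proof (cases e)
    case Inl
    then show ?thesis using assms(4) ps'(4) by auto
  next
    case (Inr a)
    show ?thesis
    proof
      assume "e \<in> fst ` set ps'"
      then obtain b where b: "(e, b) \<in> set ps'" by force
      then obtain a' where "mstep E A e a' b" using walk_element_step[OF ps'(1)] by blast
      with Inr closing have "b = v" by (auto simp: mstep_def)
      then show False using b ps'(2) by force
    qed
  qed
  from girth_le_cycle_length[OF mixed_cycle_of_walk[OF mixed_graph ps'(1,2) \<open>v \<in> V\<close> closing this]]
  show ?thesis using ps'(3) by simp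
qed

text \<open>The cycle runs y \<rightarrow> w2 \<leadsto> x \<leadsto> w1 \<rightarrow> y; the edge {y, w1} cannot occur on
  the two geodesics, since all their vertices other than w1, w2 are closer to x than y.\<close>

lemma common_neighbour_cycle:
  assumes "{y, w1} \<in> E" "{y, w2} \<in> E" "w1 \<noteq> w2"
    and "edge_reach E x w1 d1" "edge_reach E x w2 d2"
    and "\<forall>k < max d1 d2. \<not> edge_reach E x y k"
  shows "g \<le> d1 + d2 + 2"
proof -
  obtain ps1 where ps1: "walk E A x ps1 w1" "length ps1 = d1" "\<forall>p\<in>set ps1. isl (fst p)"
    "\<forall>z\<in>set (x # map snd ps1). z = w1 \<or> (\<exists>k<d1. edge_reach E x z k)"
    using edge_reach_walk[OF assms(4)] by blast
  obtain ps2 where ps2: "walk E A x ps2 w2" "length ps2 = d2" "\<forall>p\<in>set ps2. isl (fst p)"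
    "\<forall>z\<in>set (x # map snd ps2). z = w2 \<or> (\<exists>k<d2. edge_reach E x z k)"
    using edge_reach_walk[OF assms(5)] by blast
  obtain qs2 where qs2: "walk E A w2 qs2 x" "length qs2 = d2" "fst ` set qs2 = fst ` set ps2"
    using edge_walk_rev[OF ps2(1,3)] ps2(2) by auto
  have y_w1: "y \<noteq> w1" and y_w2: "y \<noteq> w2"
    using edge_neq[OF mixed_graph] assms(1,2) by auto
  have "y \<in> V" using edge_in_vertices[OF mixed_graph assms(1)] by blast
  have walk: "walk E A y ((Inl {y, w2}, w2) # qs2 @ ps1) w1"
    using assms(2) walk_append[OF qs2(1) ps1(1)] by (auto intro: walk_Cons simp: mstep_def)
  have closing: "mstep E A (Inl {y, w1}) w1 y"
    using assms(1) by (simp add: mstep_def insert_commute)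
  have "Inl {y, w1} \<notin> fst ` set ps1"
  proof
    assume "Inl {y, w1} \<in> fst ` set ps1"
    then have "y \<in> set (x # map snd ps1)" using walk_edge_endpoints[OF ps1(1)] by blast
    then show False using ps1(4) y_w1 assms(6) by auto
  qed
  moreover have "Inl {y, w1} \<notin> fst ` set ps2"
  proof
    assume "Inl {y, w1} \<in> fst ` set ps2"
    then have "y \<in> set (x # map snd ps2)" using walk_edge_endpoints[OF ps2(1)] by blast
    then show False using ps2(4) y_w2 assms(6) by auto
  qed
  moreover have "{y, w1} \<noteq> {y, w2}"
    using assms(3) y_w1 by (auto simp: doubleton_eq_iff)
  ultimately have "Inl {y, w1} \<notin> fst ` set ((Inl {y, w2}, w2) # qs2 @ ps1)"
    using qs2(3) by auto
  from closed_walk_length_ge[OF walk \<open>y \<in> V\<close> closing] this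
  show ?thesis using qs2(2) ps1(2) by simp
qed


lemma card_neighbours_in_edge_ball_le_1:
  assumes "y \<in> edge_sphere E x \<rho>" and "2 * \<rho> + 2 < g"
  shows "card (neighbours E y \<inter> edge_ball E x \<rho>) \<le> 1"
proof -
  have "finite (neighbours E y \<inter> edge_ball E x \<rho>)"
    using finite_neighbours by blast
  moreover have "w1 = w2" if w: "w1 \<in> neighbours E y \<inter> edge_ball E x \<rho>"
    "w2 \<in> neighbours E y \<inter> edge_ball E x \<rho>" for w1 w2
  proof (rule ccontr)
    assume "w1 \<noteq> w2"
    obtain d1 d2 where "d1 \<le> \<rho>" "edge_reach E x w1 d1" "d2 \<le> \<rho>" "edge_reach E x w2 d2"
      using w unfolding edge_ball_def by blast
    moreover have "{y, w1} \<in> E" "{y, w2} \<in> E" using w unfolding neighbours_def by auto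
    moreover have "\<forall>k < max d1 d2. \<not> edge_reach E x y k"
      using assms(1) \<open>d1 \<le> \<rho>\<close> \<open>d2 \<le> \<rho>\<close> unfolding edge_sphere_def by auto
    ultimately have "g \<le> d1 + d2 + 2"
      using common_neighbour_cycle[of y w1 w2 x d1 d2] \<open>w1 \<noteq> w2\<close> by blast
    with assms(2) \<open>d1 \<le> \<rho>\<close> \<open>d2 \<le> \<rho>\<close> show False by linarith
  qed
  ultimately show ?thesis using card_le_Suc0_iff_eq by (metis One_nat_def)
qed

lemma card_outward_neighbours_ge:
  assumes "y \<in> edge_sphere E x \<rho>" and "2 * \<rho> + 2 < g"
  shows "card (neighbours E y) - 1 \<le> card (neighbours E y \<inter> edge_sphere E x (Suc \<rho>))"
proof -
  note fin = finite_neighbours[of y]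
  have "card (neighbours E y) - 1 \<le> card (neighbours E y) - card (neighbours E y \<inter> edge_ball E x \<rho>)"
    using card_neighbours_in_edge_ball_le_1[OF assms] by linarith
  also have "\<dots> = card (neighbours E y - edge_ball E x \<rho>)"
    using fin by (simp add: card_Diff_subset_Int Diff_Int2)
  also have "\<dots> \<le> card (neighbours E y \<inter> edge_sphere E x (Suc \<rho>))"
    using fin edge_sphere_SucI[OF assms(1)] by (intro card_mono) auto
  finally show ?thesis .
qed

lemma outward_neighbours_disjoint:
  assumes "y1 \<in> edge_sphere E x \<rho>" "y2 \<in> edge_sphere E x \<rho>" "y1 \<noteq> y2" and "2 * \<rho> + 2 < g"
  shows "neighbours E y1 \<inter> neighbours E y2 \<inter> edge_sphere E x (Suc \<rho>) = {}"
proof (rule ccontr)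
  assume "neighbours E y1 \<inter> neighbours E y2 \<inter> edge_sphere E x (Suc \<rho>) \<noteq> {}"
  then obtain z where "{z, y1} \<in> E" "{z, y2} \<in> E" "\<forall>k < Suc \<rho>. \<not> edge_reach E x z k"
    unfolding neighbours_def edge_sphere_def by (auto simp: insert_commute)
  moreover have "edge_reach E x y1 \<rho>" "edge_reach E x y2 \<rho>"
    using assms(1,2) unfolding edge_sphere_def by auto
  ultimately have "g \<le> \<rho> + \<rho> + 2" using common_neighbour_cycle assms(3) by simp
  with assms(4) show False by linarith
qed

lemma card_edge_sphere_Suc_ge:
  assumes "x \<in> V" "2 * \<rho> + 2 < g" and deg: "\<forall>v\<in>V. r \<le> card (neighbours E v)"
  shows "card (edge_sphere E x \<rho>) * (r - 1) \<le> card (edge_sphere E x (Suc \<rho>))"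
proof -
  let ?S = "edge_sphere E x \<rho>" and ?T = "edge_sphere E x (Suc \<rho>)"
  let ?N = "\<lambda>y. neighbours E y \<inter> ?T"
  have sphere_V: "edge_sphere E x t \<subseteq> V" for t
    using edge_sphere_subset_edge_ball[of E x t] edge_ball_subset_vertices[OF mixed_graph \<open>x \<in> V\<close>, of t]
    by blast
  have fin: "finite (edge_sphere E x t)" for t
    using finite_subset[OF sphere_V finite_vertices] .
  have "r - 1 \<le> card (?N y)" if "y \<in> ?S" for y
    using card_outward_neighbours_ge[OF that assms(2)] deg sphere_V that by fastforce
  then have "card ?S * (r - 1) \<le> (\<Sum>y\<in>?S. card (?N y))"
    using sum_bounded_below[of ?S "r - 1" "\<lambda>y. card (?N y)"] by simp
  also have "\<dots> = card (\<Union>y\<in>?S. ?N y)"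
    using fin outward_neighbours_disjoint[where x = x, OF _ _ _ assms(2)]
    by (intro card_UN_disjoint[symmetric]) blast+
  also have "\<dots> \<le> card ?T"
    using fin by (intro card_mono) auto
  finally show ?thesis .
qed

lemma card_edge_sphere_ge:
  assumes "x \<in> V" and deg: "\<forall>v\<in>V. r \<le> card (neighbours E v)"
  shows "2 * Suc \<rho> + 1 \<le> g \<Longrightarrow> r * (r - 1) ^ \<rho> \<le> card (edge_sphere E x (Suc \<rho>))"
proof (induction \<rho>)
  case 0
  then show ?case
    using edge_sphere_1[OF mixed_graph] deg \<open>x \<in> V\<close> by simp
next
  case (Suc \<rho>)
  then have "r * (r - 1) ^ \<rho> * (r - 1) \<le> card (edge_sphere E x (Suc \<rho>)) * (r - 1)"
    by simp
  also have "\<dots> \<le> card (edge_sphere E x (Suc (Suc \<rho>)))"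
    using card_edge_sphere_Suc_ge[OF \<open>x \<in> V\<close> _ deg] Suc.prems by simp
  finally show ?case by (simp only: power_Suc2 mult.assoc)
qed

lemma card_edge_ball_ge:
  assumes "x \<in> V" and deg: "\<forall>v\<in>V. r \<le> card (neighbours E v)"
  shows "2 * \<rho> + 1 \<le> g \<Longrightarrow> moore_bound r \<rho> \<le> card (edge_ball E x \<rho>)"
proof (induction \<rho>)
  case 0
  then show ?case by (simp add: edge_ball_0 moore_bound_def)
next
  case (Suc \<rho>)
  have fin: "finite (edge_ball E x t)" for t
    using finite_subset[OF edge_ball_subset_vertices[OF mixed_graph \<open>x \<in> V\<close>] finite_vertices] .
  have "moore_bound r (Suc \<rho>) = moore_bound r \<rho> + r * (r - 1) ^ \<rho>"
    by (simp add: moore_bound_def)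
  also have "\<dots> \<le> card (edge_ball E x \<rho>) + card (edge_sphere E x (Suc \<rho>))"
    using Suc card_edge_sphere_ge[OF assms] by (simp add: add_mono)
  also have "\<dots> = card (edge_ball E x (Suc \<rho>))"
    unfolding edge_ball_Suc using fin finite_subset[OF edge_sphere_subset_edge_ball fin]
    by (intro card_Un_disjoint[symmetric] edge_ball_Int_edge_sphere_Suc)
  finally show ?case .
qed

lemma arc_edge_balls_cycle:
  assumes arc: "(u, u') \<in> A" and walk: "walk E A u' ps v"
    and "z \<in> edge_ball E u \<rho>" "z \<in> edge_ball E v \<sigma>"
  shows "g \<le> length ps + \<sigma> + \<rho> + 1"
proof -
  obtain \<rho>' \<sigma>' where "\<rho>' \<le> \<rho>" "edge_reach E u z \<rho>'" "\<sigma>' \<le> \<sigma>" "edge_reach E v z \<sigma>'"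
    using assms(3,4) unfolding edge_ball_def by blast
  then obtain ps_u ps_v where ps_u: "walk E A u ps_u z" "length ps_u = \<rho>'" "\<forall>p\<in>set ps_u. isl (fst p)"
    and ps_v: "walk E A v ps_v z" "length ps_v = \<sigma>'"
    using edge_reach_walk by metis
  obtain qs_u where qs_u: "walk E A z qs_u u" "length qs_u = \<rho>'"
    using edge_walk_rev[OF ps_u(1,3)] ps_u(2) by auto
  have closed: "walk E A u' (ps @ ps_v @ qs_u) u"
    using walk ps_v(1) qs_u(1) by (blast intro: walk_append)
  have "u' \<in> V" using arc_in_vertices[OF mixed_graph arc] by blast
  moreover have "mstep E A (Inr (u, u')) u u'" using arc by (simp add: mstep_def)
  ultimately have "g \<le> length (ps @ ps_v @ qs_u) + 1"
    using closed_walk_length_ge[OF closed] by (metis sum.disc(2))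
  then show ?thesis
    using ps_v(2) qs_u(2) \<open>\<rho>' \<le> \<rho>\<close> \<open>\<sigma>' \<le> \<sigma>\<close> by simp
qed

lemma card_vertices_ge_sum_moore_bound:
  assumes arcs: "\<And>j. (xs j, xs (Suc j)) \<in> A" and deg: "\<forall>v\<in>V. r \<le> card (neighbours E v)"
  shows "(\<Sum>j<g. moore_bound r (min j (g - 1 - j))) \<le> card V"
proof -
  define F where "F j = edge_ball E (xs j) (min j (g - 1 - j))" for j
  have xs_V: "xs j \<in> V" for j
    using arc_in_vertices[OF mixed_graph arcs] by blast
  have F_V: "F j \<subseteq> V" for j
    unfolding F_def using edge_ball_subset_vertices[OF mixed_graph xs_V] .
  have F_finite: "finite (F j)" for j
    using finite_subset[OF F_V finite_vertices] .
  have arc_walk: "\<exists>ps. walk E A (xs a) ps (xs (a + n)) \<and> length ps = n" for a n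
  proof (induction n arbitrary: a)
    case (Suc n)
    then obtain ps where "walk E A (xs (Suc a)) ps (xs (Suc a + n))" "length ps = n" by blast
    moreover have "mstep E A (Inr (xs a, xs (Suc a))) (xs a) (xs (Suc a))"
      using arcs by (simp add: mstep_def)
    ultimately show ?case by (auto intro!: exI[of _ "(Inr (xs a, xs (Suc a)), xs (Suc a)) # ps"] walk_Cons)
  qed (auto intro: walk_Nil)
  have F_disjoint_less: "F j \<inter> F l = {}" if "j < l" "l < g" for j l
  proof (rule ccontr)
    assume "F j \<inter> F l \<noteq> {}"
    then obtain z where "z \<in> F j" "z \<in> F l" by blast
    moreover obtain ps where "walk E A (xs (Suc j)) ps (xs l)" "length ps = l - Suc j"
      using arc_walk[of "Suc j" "l - Suc j"] \<open>j < l\<close> by auto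
    ultimately have "g \<le> (l - Suc j) + min l (g - 1 - l) + min j (g - 1 - j) + 1"
      using arc_edge_balls_cycle[OF arcs] unfolding F_def by metis
    with that show False by linarith
  qed
  have F_disjoint: "F j \<inter> F l = {}" if "j < g" "l < g" "j \<noteq> l" for j l
    using that F_disjoint_less[of j l] F_disjoint_less[of l j]
    by (cases "j < l") (auto simp: Int_commute)
  have "(\<Sum>j<g. moore_bound r (min j (g - 1 - j))) \<le> (\<Sum>j<g. card (F j))"
    unfolding F_def by (intro sum_mono card_edge_ball_ge[OF xs_V deg]) (auto simp: min_def)
  also have "\<dots> = card (\<Union>j<g. F j)"
    using F_finite F_disjoint by (intro card_UN_disjoint[symmetric]) auto
  also have "\<dots> \<le> card V"
    using F_V finite_vertices by (intro card_mono) auto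
  finally show ?thesis .
qed

end

lemma arc_sequence:
  assumes "V \<noteq> {}" and "\<And>v. v \<in> V \<Longrightarrow> \<exists>u\<in>V. (v, u) \<in> A"
  obtains xs where "\<And>j. (xs j, xs (Suc j)) \<in> A"
proof -
  have "\<exists>xs. \<forall>j. xs j \<in> V \<and> (xs j, xs (Suc j)) \<in> A"
    using assms by (intro dependent_nat_choice[where P = "\<lambda>_ x. x \<in> V" and Q = "\<lambda>_ x y. (x, y) \<in> A"]) auto
  then show ?thesis using that by blast
qed

theorem theorem2:
  fixes r g :: nat and V :: "'a set" and E :: "'a set set" and A :: "('a \<times> 'a) set"
  assumes "r \<ge> 1" and "g \<ge> 3"
    and "zrg_mixed_graph 1 r g V E A"
  shows "card V \<ge> mixed_bound r g"
proof -
  from assms(3) have graph: "mixed_graph V E A" and girth: "mixed_girth V E A g"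
    and degrees: "\<forall>v\<in>V. card {u. (v, u) \<in> A} = 1 \<and> card {e\<in>E. v \<in> e} = r"
    unfolding zrg_mixed_graph_def by auto
  interpret mixed_graph_girth_ge V E A g
    using graph girth unfolding mixed_girth_def by unfold_locales auto
  obtain vs cs where "mixed_cycle V E A vs cs"
    using girth unfolding mixed_girth_def by blast
  then have nonempty: "V \<noteq> {}" unfolding mixed_cycle_def by auto
  have successor: "\<exists>u\<in>V. (v, u) \<in> A" if "v \<in> V" for v
  proof -
    have "{u. (v, u) \<in> A} \<noteq> {}" using degrees that by force
    then show ?thesis using arc_in_vertices[OF graph] by blast
  qed
  obtain xs where arcs: "\<And>j. (xs j, xs (Suc j)) \<in> A"
    using arc_sequence[OF nonempty successor] by metis
  have "\<forall>v\<in>V. r \<le> card (neighbours E v)"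
    using degrees card_neighbours[OF graph] by simp
  from card_vertices_ge_sum_moore_bound[where xs = xs, OF arcs this] show ?thesis
    unfolding mixed_bound_eq_sum_moore_bound[OF assms(2)] .
qed

end
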